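(* Let $M$ be an observable FSM with $n$ states, all reachable, such that every state of $M$ is d-reachable and every two distinct states $s_1\neq s_2$ satisfy $\Delta_M(s_1)\neq\Delta_M(s_2)$. Let $m\ge n$. Then every test suite $T$ produced by $\textsc{GenerateTestSuite}(M,m)$ satisfies $|T|\le n\cdot|\Sigma_I|^{m-n+1}$.
   Context: FSMs and notation. An FSM is $M=(S,s_0,\Sigma_I,\Sigma_O,h_M)$ with finite state set $S$, initial state $s_0$, finite input/output alphabets and $h_M\subseteq S\times\Sigma_I\times\Sigma_O\times S$. IO sequences are written $\bar x/\bar y$. $L_M(s)$ is the set of IO sequences $x_1\dots x_k/y_1\dots y_k$ such that there are states $s=q_0,\dots,q_k$ with $(q_{i-1},x_i,y_i,q_i)\in h_M$; $L(M)=L_M(s_0)$. $out(s,x)=\{y\mid\exists s'.(s,x,y,s')\in h_M\}$. $M$ is observable if for all $s,x,y$ at most one $s'$ has $(s,x,y,s')\in h_M$; then $s\text{-after-}\alpha$ is the unique state reached from $s$ by $\alpha\in L_M(s)$. $\Delta_M(s)=\{x\mid out(s,x)\neq\varnothing\}$. $\mathrm{Pref}$ denotes the set of prefixes (including $\epsilon$), lifted to sets; $A.B=\{a.b\mid a\in A,b\in B\}$ with $A.\varnothing=A$. d-reachability and state cover. $\bar x$ is strongly defined in $M$ if for every prefix $\bar x_1.x$ of $\bar x$ ($x\in\Sigma_I$) and every $\bar x_1/\bar y_1\in L(M)$, $x\in\Delta_M(s_0\text{-after-}\bar x_1/\bar y_1)$. $\bar x$ d-reaches $s$ if $\bar x$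 is strongly defined and $\{s_0\text{-after-}\bar x/\bar y\mid \bar x/\bar y\in L(M)\}=\{s\}$. For $S'\subseteq S$, $\widehat{S'}$ is the set of states in $S'$ d-reached by some input sequence. A state cover $V$ is a set consisting of $\epsilon$ (which d-reaches $s_0$) and, for every other d-reachable state, exactly one input sequence d-reaching it; for $s\in\widehat S$ let $\bar v_s\in V$ be the element d-reaching $s$. $V'=\{\bar x/\bar y\in L(M)\mid \bar x\in V\}$. r-distinguishability. Every $W\subseteq\Sigma_I^*$ r(0)-distinguishes states $s_1,s_2$ with $\Delta_M(s_1)\neq\Delta_M(s_2)$. For $k\ge0$, $W$ r($k+1$)-distinguishes $s_1,s_2$ if it r($k$)-distinguishes them, or there is $x\in\Delta_M(s_1)\cap\Delta_M(s_2)\cap\mathrm{Pref}(W)$ such that for every $y\in out(s_1,x)\cap out(s_2,x)$ some $W'$ with $\{x\}.W'\subseteq\mathrm{Pref}(W)$ r($k$)-distinguishes $s_1\text{-after-}x/y$ and $s_2\text{-after-}x/y$. $W$ r-distinguishes $s_1,s_2$ if it r($k$)-distinguishes them for some $k$; states are r-distinguishable if some $W$ r-distinguishes them. $S_D$ is the set of all maximal (w.r.t. inclusion) subsets of $S$ whose elements are pairwise r-distinguishable (a state r-distinguishable from no other state yields a singleton). Termination and traversal sets. For $s\in\widehat S$, $\bar x/\bar y\in L_M(s)$ and $S'\in S_D$, say $S'$ terminates $\bar x/\bar y$ for $s$ and $m$ if the number of nonempty prefixes $\pi$ of $\bar x/\bar y$ with $s\text{-after-}\pi\in S'$ equals $m-|\widehat{S'}|+1$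 and no proper prefix of $\bar x/\bar y$ is terminated for $s$ and $m$ by any element of $S_D$. $term(s,\bar x/\bar y,m)$ is the set of such $S'$. $Tr(s,m)=\mathrm{Pref}\{\bar x\mid\exists\bar y.\ \bar x/\bar y\in L_M(s)\wedge term(s,\bar x/\bar y,m)\neq\varnothing\}$. Procedure $\textsc{GenerateTestSuite}(M,m)$: (1) Choose a state cover $V$, form $V'$, and set $T:=\bigcup_{s\in\widehat S}\{\bar v_s\}.Tr(s,m)$. (2) Let $D=\{(s,\bar x/\bar y)\mid s\in\widehat S,\ \bar x/\bar y\in L_M(s),\ term(s,\bar x/\bar y,m)\neq\varnothing\}$. For each $(s,\bar x/\bar y)\in D$: choose some $S_i\in term(s,\bar x/\bar y,m)$; then for every pair of traces $\bar x_1/\bar y_1,\bar x_2/\bar y_2$ in $V'\cup\{\beta.\pi\mid \beta\in V'\text{ with input portion }\bar v_s,\ \pi\in\mathrm{Pref}(\bar x/\bar y)\}$, let $s_j=s_0\text{-after-}\bar x_j/\bar y_j$; if $s_1\neq s_2$ and $s_1,s_2\in S_i$, let $W'=\{\bar x'\mid \bar x_1.\bar x'\in\mathrm{Pref}(T)\text{ and }\bar x_2.\bar x'\in\mathrm{Pref}(T)\}$ (for the current $T$); if $W'$ does not r-distinguish $s_1,s_2$, choose any $W$ that r-distinguishes $s_1,s_2$ and set $T:=T\cup\{\bar x_1,\bar x_2\}.W$. (3) Finally remove from $T$ every sequence that is a proper prefix of another element of $T$, and return $T$. *)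

theory Defs
  imports Main
begin

(* Finite state machines M = (S, s0, Sigma_I, Sigma_O, h_M).
   Input sequences are lists of inputs; IO sequences xs/ys are lists of
   (input, output) pairs. *)
record ('s, 'x, 'y) fsm =
  states  :: "'s set"
  initial :: 's
  inputs  :: "'x set"
  outputs :: "'y set"
  trans   :: "('s \<times> 'x \<times> 'y \<times> 's) set"

definition well_formed :: "('s,'x,'y) fsm \<Rightarrow> bool" where
  "well_formed M \<longleftrightarrow> finite (states M) \<and> initial M \<in> states M \<and>
     finite (inputs M) \<and> finite (outputs M) \<and>
     trans M \<subseteq> states M \<times> inputs M \<times> outputs M \<times> states M"

inductive path :: "('s,'x,'y) fsm \<Rightarrow> 's \<Rightarrow> ('x \<times> 'y) list \<Rightarrow> 's \<Rightarrow> bool"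
  for M where
  nil:  "path M s [] s"
| cons: "(s, x, y, s1) \<in> trans M \<Longrightarrow> path M s1 io s' \<Longrightarrow> path M s ((x, y) # io) s'"

definition lang :: "('s,'x,'y) fsm \<Rightarrow> 's \<Rightarrow> ('x \<times> 'y) list set" where
  "lang M s = {io. \<exists>s'. path M s io s'}"

definition out :: "('s,'x,'y) fsm \<Rightarrow> 's \<Rightarrow> 'x \<Rightarrow> 'y set" where
  "out M s x = {y. \<exists>s'. (s, x, y, s') \<in> trans M}"

definition observable :: "('s,'x,'y) fsm \<Rightarrow> bool" where
  "observable M \<longleftrightarrow> (\<forall>s x y s1 s2. (s, x, y, s1) \<in> trans M \<longrightarrow> (s, x, y, s2) \<in> trans M \<longrightarrow> s1 = s2)"

(* s-after-io (meaningful for observable M and io in L_M(s)) *)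
definition after :: "('s,'x,'y) fsm \<Rightarrow> 's \<Rightarrow> ('x \<times> 'y) list \<Rightarrow> 's" where
  "after M s io = (THE s'. path M s io s')"

definition Delta :: "('s,'x,'y) fsm \<Rightarrow> 's \<Rightarrow> 'x set" where
  "Delta M s = {x. out M s x \<noteq> {}}"

definition reachable :: "('s,'x,'y) fsm \<Rightarrow> 's \<Rightarrow> bool" where
  "reachable M s \<longleftrightarrow> (\<exists>io. path M (initial M) io s)"

definition pref :: "'a list set \<Rightarrow> 'a list set" where
  "pref A = {p. \<exists>a\<in>A. \<exists>r. a = p @ r}"

(* A.B with the convention A.{} = A *)
definition cat :: "'a list set \<Rightarrow> 'a list set \<Rightarrow> 'a list set" where
  "cat A B = (if B = {} then A else {a @ b | a b. a \<in> A \<and> b \<in> B})"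

definition strongly_defined :: "('s,'x,'y) fsm \<Rightarrow> 'x list \<Rightarrow> bool" where
  "strongly_defined M xs \<longleftrightarrow>
     (\<forall>xs1 x r. xs = xs1 @ [x] @ r \<longrightarrow>
        (\<forall>io q. map fst io = xs1 \<longrightarrow> path M (initial M) io q \<longrightarrow> x \<in> Delta M q))"

definition d_reaches :: "('s,'x,'y) fsm \<Rightarrow> 'x list \<Rightarrow> 's \<Rightarrow> bool" where
  "d_reaches M xs s \<longleftrightarrow> strongly_defined M xs \<and>
     {q. \<exists>io. map fst io = xs \<and> path M (initial M) io q} = {s}"

definition d_reachable :: "('s,'x,'y) fsm \<Rightarrow> 's \<Rightarrow> bool" where
  "d_reachable M s \<longleftrightarrow> (\<exists>xs. d_reaches M xs s)"

definition dreach :: "('s,'x,'y) fsm \<Rightarrow> 's set \<Rightarrow> 's set" where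
  "dreach M S' = {s \<in> S'. d_reachable M s}"

(* a state cover V = v ` \<widehat>S, with v s = \<bar>v_s and v s0 = [] *)
definition state_cover :: "('s,'x,'y) fsm \<Rightarrow> ('s \<Rightarrow> 'x list) \<Rightarrow> bool" where
  "state_cover M v \<longleftrightarrow> v (initial M) = [] \<and>
     (\<forall>s \<in> dreach M (states M). d_reaches M (v s) s)"

fun rdist_k :: "('s,'x,'y) fsm \<Rightarrow> 'x list set \<Rightarrow> nat \<Rightarrow> 's \<Rightarrow> 's \<Rightarrow> bool" where
  "rdist_k M W 0 s1 s2 = (Delta M s1 \<noteq> Delta M s2)"
| "rdist_k M W (Suc k) s1 s2 = (rdist_k M W k s1 s2 \<or>
     (\<exists>x \<in> Delta M s1 \<inter> Delta M s2. [x] \<in> pref W \<and>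
        (\<forall>y \<in> out M s1 x \<inter> out M s2 x. \<exists>W'. cat {[x]} W' \<subseteq> pref W \<and>
           rdist_k M W' k (after M s1 [(x, y)]) (after M s2 [(x, y)]))))"

definition r_distinguishes :: "('s,'x,'y) fsm \<Rightarrow> 'x list set \<Rightarrow> 's \<Rightarrow> 's \<Rightarrow> bool" where
  "r_distinguishes M W s1 s2 \<longleftrightarrow> (\<exists>k. rdist_k M W k s1 s2)"

definition r_distinguishable :: "('s,'x,'y) fsm \<Rightarrow> 's \<Rightarrow> 's \<Rightarrow> bool" where
  "r_distinguishable M s1 s2 \<longleftrightarrow> (\<exists>W. r_distinguishes M W s1 s2)"

definition pairwise_rd :: "('s,'x,'y) fsm \<Rightarrow> 's set \<Rightarrow> bool" where
  "pairwise_rd M A \<longleftrightarrow> (\<forall>s1\<in>A. \<forall>s2\<in>A. s1 \<noteq> s2 \<longrightarrow> r_distinguishable M s1 s2)"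

definition SD :: "('s,'x,'y) fsm \<Rightarrow> 's set set" where
  "SD M = {A. A \<subseteq> states M \<and> pairwise_rd M A \<and>
              (\<forall>B. A \<subseteq> B \<and> B \<subseteq> states M \<and> pairwise_rd M B \<longrightarrow> B = A)}"

definition visits :: "('s,'x,'y) fsm \<Rightarrow> 's \<Rightarrow> ('x \<times> 'y) list \<Rightarrow> 's set \<Rightarrow> nat" where
  "visits M s io S' = card {k \<in> {1..length io}. after M s (take k io) \<in> S'}"

function termset :: "('s,'x,'y) fsm \<Rightarrow> 's \<Rightarrow> ('x \<times> 'y) list \<Rightarrow> nat \<Rightarrow> 's set set" where
  "termset M s io m =
     (if (\<forall>k \<in> {..<length io}. termset M s (take k io) m = {})
      then {S' \<in> SD M. visits M s io S' = m - card (dreach M S') + 1}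
      else {})"
  by pat_completeness auto
termination
  by (relation "measure (\<lambda>(M, s, io, m). length io)") auto

definition Tr :: "('s,'x,'y) fsm \<Rightarrow> 's \<Rightarrow> nat \<Rightarrow> 'x list set" where
  "Tr M s m = pref {map fst io | io. io \<in> lang M s \<and> termset M s io m \<noteq> {}}"

definition Dset :: "('s,'x,'y) fsm \<Rightarrow> nat \<Rightarrow> ('s \<times> ('x \<times> 'y) list) set" where
  "Dset M m = {(s, io). s \<in> dreach M (states M) \<and> io \<in> lang M s \<and> termset M s io m \<noteq> {}}"

definition Vtraces :: "('s,'x,'y) fsm \<Rightarrow> ('s \<Rightarrow> 'x list) \<Rightarrow> ('x \<times> 'y) list set" where
  "Vtraces M v = {io \<in> lang M (initial M). map fst io \<in> v ` dreach M (states M)}"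

definition pair_traces :: "('s,'x,'y) fsm \<Rightarrow> ('s \<Rightarrow> 'x list) \<Rightarrow> 's \<Rightarrow> ('x \<times> 'y) list \<Rightarrow> ('x \<times> 'y) list set" where
  "pair_traces M v s io = Vtraces M v \<union>
     {b @ p | b p. b \<in> Vtraces M v \<and> map fst b = v s \<and> p \<in> pref {io}}"

definition process_pair :: "('s,'x,'y) fsm \<Rightarrow> 's set \<Rightarrow> 'x list set \<Rightarrow>
    (('x \<times> 'y) list \<times> ('x \<times> 'y) list) \<Rightarrow> 'x list set \<Rightarrow> bool" where
  "process_pair M Si T tp T' =
     (let t1 = fst tp; t2 = snd tp;
          s1 = after M (initial M) t1; s2 = after M (initial M) t2;
          x1 = map fst t1; x2 = map fst t2;
          W' = {x'. x1 @ x' \<in> pref T \<and> x2 @ x' \<in> pref T}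
      in if s1 \<noteq> s2 \<and> s1 \<in> Si \<and> s2 \<in> Si \<and> \<not> r_distinguishes M W' s1 s2
         then (\<exists>W. r_distinguishes M W s1 s2 \<and> T' = T \<union> cat {x1, x2} W)
         else T' = T)"

inductive process_pairs :: "('s,'x,'y) fsm \<Rightarrow> 's set \<Rightarrow> 'x list set \<Rightarrow>
    (('x \<times> 'y) list \<times> ('x \<times> 'y) list) list \<Rightarrow> 'x list set \<Rightarrow> bool" for M Si where
  "process_pairs M Si T [] T"
| "process_pair M Si T tp T1 \<Longrightarrow> process_pairs M Si T1 tps T2 \<Longrightarrow>
   process_pairs M Si T (tp # tps) T2"

(* processing the elements of D in some order; for each, some choice of S_i
   and some enumeration order of all pairs of traces *)
inductive process_D :: "('s,'x,'y) fsm \<Rightarrow> nat \<Rightarrow> ('s \<Rightarrow> 'x list) \<Rightarrow> 'x list set \<Rightarrow>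
    ('s \<times> ('x \<times> 'y) list) list \<Rightarrow> 'x list set \<Rightarrow> bool" for M m v where
  "process_D M m v T [] T"
| "Si \<in> termset M s io m \<Longrightarrow> distinct tps \<Longrightarrow>
   set tps = pair_traces M v s io \<times> pair_traces M v s io \<Longrightarrow>
   process_pairs M Si T tps T1 \<Longrightarrow> process_D M m v T1 ds T2 \<Longrightarrow>
   process_D M m v T ((s, io) # ds) T2"

(* T is a possible result of GenerateTestSuite(M, m) *)
definition generate_test_suite :: "('s,'x,'y) fsm \<Rightarrow> nat \<Rightarrow> 'x list set \<Rightarrow> bool" where
  "generate_test_suite M m T \<longleftrightarrow>
     (\<exists>v ds T2. state_cover M v \<and>
        distinct ds \<and> set ds = Dset M m \<and>
        process_D M m v (\<Union>s \<in> dreach M (states M). cat {v s} (Tr M s m)) ds T2 \<and>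
        T = {t \<in> T2. \<not> (\<exists>t' \<in> T2. \<exists>r. r \<noteq> [] \<and> t' = t @ r)})"

end

theory Submission
  imports Defs
begin

(* Distinct input domains make any two distinct states r(0)-distinguished by every set W, so
   S_D consists of the whole state set and step (2) of the procedure never adds a sequence.
   Since all states are d-reachable, a trace from s is terminated exactly when it has
   m - n + 1 transitions; hence after removing proper prefixes, T consists of at most one
   sequence v_s.x for each state s and each input sequence x of length m - n + 1. *)

declare termset.simps [simp del]

lemma path_in_states:
  assumes "path M s io q" "well_formed M" "s \<in> states M"
  shows "q \<in> states M \<and> set (map fst io) \<subseteq> inputs M"
  using assms by (induction rule: path.induct) (auto simp: well_formed_def)

lemma path_unique:
  assumes "path M s io q1" "observable M" "path M s io q2"
  shows "q1 = q2"
  using assms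
proof (induction arbitrary: q2 rule: path.induct)
  case (nil s)
  then show ?case by (auto elim: path.cases)
next
  case (cons s x y s1 io s')
  from cons.prems(2) obtain s1' where "(s, x, y, s1') \<in> trans M" "path M s1' io q2"
    by (auto elim: path.cases)
  with cons show ?case unfolding observable_def by metis
qed

lemma after_eq_path_target:
  assumes "observable M" "path M s io q"
  shows "after M s io = q"
  unfolding after_def
proof (rule the_equality)
  show "path M s io q" by fact
  show "q' = q" if "path M s io q'" for q'
    using path_unique[OF that assms] .
qed

lemma path_appendD:
  assumes "path M s (xs @ ys) q"
  shows "\<exists>q'. path M s xs q' \<and> path M q' ys q"
  using assms
proof (induction xs arbitrary: s)
  case Nil
  then show ?case by (auto intro: path.nil)
next
  case (Cons xy xs)
  then obtain x y s1 where "xy = (x, y)" "(s, x, y, s1) \<in> trans M" "path M s1 (xs @ ys) q"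
    by (auto elim: path.cases)
  moreover obtain q' where "path M s1 xs q'" "path M q' ys q"
    using Cons.IH \<open>path M s1 (xs @ ys) q\<close> by blast
  ultimately show ?case by (auto intro: path.cons)
qed

lemma after_take_in_states:
  assumes "well_formed M" "observable M" "s \<in> states M" "io \<in> lang M s"
  shows "after M s (take k io) \<in> states M"
proof -
  obtain q where "path M s io q" using assms(4) by (auto simp: lang_def)
  then obtain q' where q': "path M s (take k io) q'"
    using path_appendD[of M s "take k io" "drop k io"] by auto
  then show ?thesis
    using after_eq_path_target[OF assms(2) q'] path_in_states[OF q' assms(1,3)] by simp
qed

lemma termset_SD: "Si \<in> termset M s io m \<Longrightarrow> Si \<in> SD M"
  by (subst (asm) termset.simps) (auto split: if_splits)

lemma termset_visits:
  "Si \<in> termset M s io m \<Longrightarrow> visits M s io Si = m - card (dreach M Si) + 1"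
  by (subst (asm) termset.simps) (auto split: if_splits)

lemma r_distinguishes_if_Delta_neq:
  "Delta M s1 \<noteq> Delta M s2 \<Longrightarrow> r_distinguishes M W s1 s2"
  unfolding r_distinguishes_def by (intro exI[of _ 0]) simp

lemma SD_eq_states:
  assumes "\<forall>s1 \<in> states M. \<forall>s2 \<in> states M. s1 \<noteq> s2 \<longrightarrow> Delta M s1 \<noteq> Delta M s2"
    and "S' \<in> SD M"
  shows "S' = states M"
proof -
  have "pairwise_rd M (states M)"
    using assms(1) r_distinguishes_if_Delta_neq
    unfolding pairwise_rd_def r_distinguishable_def by metis
  with assms(2) show ?thesis unfolding SD_def by blast
qed

lemma process_pair_unchanged:
  assumes "\<forall>s1 \<in> Si. \<forall>s2 \<in> Si. s1 \<noteq> s2 \<longrightarrow> Delta M s1 \<noteq> Delta M s2"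
    and "process_pair M Si T tp T'"
  shows "T' = T"
proof -
  have "r_distinguishes M W s1 s2" if "s1 \<in> Si" "s2 \<in> Si" "s1 \<noteq> s2" for W s1 s2
    using assms(1) that by (intro r_distinguishes_if_Delta_neq) blast
  with assms(2) show ?thesis unfolding process_pair_def Let_def by (auto split: if_splits)
qed

lemma process_pairs_unchanged:
  assumes "process_pairs M Si T tps T'"
    and "\<forall>s1 \<in> Si. \<forall>s2 \<in> Si. s1 \<noteq> s2 \<longrightarrow> Delta M s1 \<noteq> Delta M s2"
  shows "T' = T"
  using assms
proof (induction rule: process_pairs.induct)
  case (1 T)
  then show ?case by simp
next
  case (2 T tp T1 tps T2)
  then show ?case using process_pair_unchanged[OF "2.prems" "2.hyps"(1)] by simp
qed

lemma process_D_unchanged: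
  assumes "process_D M m v T ds T'"
    and "\<forall>s1 \<in> states M. \<forall>s2 \<in> states M. s1 \<noteq> s2 \<longrightarrow> Delta M s1 \<noteq> Delta M s2"
  shows "T' = T"
  using assms
proof (induction rule: process_D.induct)
  case (1 T)
  then show ?case by simp
next
  case (2 Si s io tps T T1 ds T2)
  have "Si = states M" using SD_eq_states[OF "2.prems" termset_SD[OF "2.hyps"(1)]] .
  then have "T1 = T" using process_pairs_unchanged[OF "2.hyps"(4)] "2.prems" by simp
  with "2.IH" "2.prems" show ?case by simp
qed

definition terminated_inputs :: "('s,'x,'y) fsm \<Rightarrow> 's \<Rightarrow> nat \<Rightarrow> 'x list set" where
  "terminated_inputs M s m = {map fst io | io. io \<in> lang M s \<and> termset M s io m \<noteq> {}}"

lemma Tr_eq_pref_terminated_inputs: "Tr M s m = pref (terminated_inputs M s m)"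
  unfolding Tr_def terminated_inputs_def ..

lemma termset_nonempty_length:
  assumes "well_formed M" "observable M" "s \<in> states M" "io \<in> lang M s"
    and "\<forall>s1 \<in> states M. \<forall>s2 \<in> states M. s1 \<noteq> s2 \<longrightarrow> Delta M s1 \<noteq> Delta M s2"
    and "\<forall>s \<in> states M. d_reachable M s"
    and "termset M s io m \<noteq> {}"
  shows "length io = m - card (states M) + 1"
proof -
  obtain Si where Si: "Si \<in> termset M s io m" using assms(7) by blast
  then have "Si = states M" using SD_eq_states[OF assms(5) termset_SD] by blast
  moreover have "dreach M (states M) = states M" using assms(6) by (auto simp: dreach_def)
  moreover have "{k \<in> {1..length io}. after M s (take k io) \<in> states M} = {1..length io}"
    using after_take_in_states[OF assms(1-4)] by blast
  then have "visits M s io (states M) = length io" by (simp add: visits_def)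
  ultimately show ?thesis using termset_visits[OF Si] by simp
qed

lemma terminated_inputs_subset_lists:
  assumes "well_formed M" "observable M" "s \<in> states M"
    and "\<forall>s1 \<in> states M. \<forall>s2 \<in> states M. s1 \<noteq> s2 \<longrightarrow> Delta M s1 \<noteq> Delta M s2"
    and "\<forall>s \<in> states M. d_reachable M s"
  shows "terminated_inputs M s m
           \<subseteq> {xs. set xs \<subseteq> inputs M \<and> length xs = m - card (states M) + 1}"
proof
  fix xs assume "xs \<in> terminated_inputs M s m"
  then obtain io where io: "xs = map fst io" "io \<in> lang M s" "termset M s io m \<noteq> {}"
    unfolding terminated_inputs_def by blast
  obtain q where "path M s io q" using io(2) by (auto simp: lang_def)
  then have "set xs \<subseteq> inputs M" using io(1) path_in_states[OF _ assms(1,3)] by simp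
  moreover have "length xs = m - card (states M) + 1"
    using io termset_nonempty_length[OF assms(1-3) io(2) assms(4,5)] by simp
  ultimately show "xs \<in> {xs. set xs \<subseteq> inputs M \<and> length xs = m - card (states M) + 1}"
    by simp
qed

lemma maximal_in_cat_pref:
  assumes "t \<in> cat {u} (pref B)" "cat {u} (pref B) \<subseteq> A"
    and "\<not> (\<exists>t' \<in> A. \<exists>r. r \<noteq> [] \<and> t' = t @ r)"
  shows "t \<in> cat {u} B"
proof (cases "B = {}")
  case True
  then show ?thesis using assms(1) by (simp add: pref_def)
next
  case False
  have "B \<subseteq> pref B" unfolding pref_def by blast
  with False have nonempty: "pref B \<noteq> {}" by blast
  have "t \<in> {a @ b | a b. a \<in> {u} \<and> b \<in> pref B}"
    using assms(1) by (simp only: cat_def if_not_P[OF nonempty])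
  then obtain p r where t: "t = u @ p" and pr: "p @ r \<in> B" unfolding pref_def by blast
  have "u @ p @ r \<in> cat {u} (pref B)"
    using pr \<open>B \<subseteq> pref B\<close> unfolding cat_def if_not_P[OF nonempty] by blast
  then have "r = []" using assms(2,3) t by auto
  then show ?thesis using False t pr unfolding cat_def by auto
qed

lemma card_cat_singleton_le:
  assumes "finite B"
  shows "finite (cat {u} B) \<and> card (cat {u} B) \<le> max 1 (card B)"
proof -
  have "cat {u} B = (if B = {} then {u} else (@) u ` B)" by (auto simp: cat_def)
  then show ?thesis using assms card_image_le[OF assms, of "(@) u"] by auto
qed

lemma card_cat_terminated_inputs_le:
  assumes "well_formed M" "inputs M \<noteq> {}" "observable M" "s \<in> states M"
    and "\<forall>s1 \<in> states M. \<forall>s2 \<in> states M. s1 \<noteq> s2 \<longrightarrow> Delta M s1 \<noteq> Delta M s2"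
    and "\<forall>s \<in> states M. d_reachable M s"
  shows "finite (cat {u} (terminated_inputs M s m)) \<and>
    card (cat {u} (terminated_inputs M s m)) \<le> card (inputs M) ^ (m - card (states M) + 1)"
proof -
  define L where "L = {xs. set xs \<subseteq> inputs M \<and> length xs = m - card (states M) + 1}"
  have "finite (inputs M)" using assms(1) by (simp add: well_formed_def)
  then have "finite L" and card_L: "card L = card (inputs M) ^ (m - card (states M) + 1)"
    unfolding L_def by (simp_all add: finite_lists_length_eq card_lists_length_eq)
  have "card (inputs M) > 0" using \<open>finite (inputs M)\<close> assms(2) by (simp add: card_gt_0_iff)
  then have "1 \<le> card L" unfolding card_L by simp
  have sub: "terminated_inputs M s m \<subseteq> L"
    unfolding L_def using terminated_inputs_subset_lists[OF assms(1,3,4,5,6)] .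
  then have "finite (terminated_inputs M s m)" using \<open>finite L\<close> finite_subset by blast
  moreover have "card (terminated_inputs M s m) \<le> card L" using card_mono[OF \<open>finite L\<close> sub] .
  ultimately show ?thesis
    using card_cat_singleton_le[of "terminated_inputs M s m" u] \<open>1 \<le> card L\<close> card_L by linarith
qed

lemma finite_card_UN_le:
  assumes "finite S" "\<And>s. s \<in> S \<Longrightarrow> finite (C s) \<and> card (C s) \<le> b"
  shows "finite (\<Union>s \<in> S. C s) \<and> card (\<Union>s \<in> S. C s) \<le> card S * b"
proof
  show "finite (\<Union>s \<in> S. C s)" using assms by blast
  have "card (\<Union>s \<in> S. C s) \<le> (\<Sum>s \<in> S. card (C s))" using card_UN_le[OF assms(1)] .
  also have "\<dots> \<le> card S * b" using sum_bounded_above[of S "\<lambda>s. card (C s)" b] assms(2) by simp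
  finally show "card (\<Union>s \<in> S. C s) \<le> card S * b" .
qed

lemma generate_test_suite_subset:
  assumes "\<forall>s1 \<in> states M. \<forall>s2 \<in> states M. s1 \<noteq> s2 \<longrightarrow> Delta M s1 \<noteq> Delta M s2"
    and "\<forall>s \<in> states M. d_reachable M s"
    and "generate_test_suite M m T"
  obtains v where "T \<subseteq> (\<Union>s \<in> states M. cat {v s} (terminated_inputs M s m))"
proof -
  obtain v T2 ds where T2: "process_D M m v (\<Union>s \<in> dreach M (states M). cat {v s} (Tr M s m)) ds T2"
    and T: "T = {t \<in> T2. \<not> (\<exists>t' \<in> T2. \<exists>r. r \<noteq> [] \<and> t' = t @ r)}"
    using assms(3) unfolding generate_test_suite_def by blast
  have "dreach M (states M) = states M" using assms(2) by (auto simp: dreach_def)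
  then have T2_eq: "T2 = (\<Union>s \<in> states M. cat {v s} (pref (terminated_inputs M s m)))"
    using process_D_unchanged[OF T2 assms(1)] by (simp add: Tr_eq_pref_terminated_inputs)
  have "T \<subseteq> (\<Union>s \<in> states M. cat {v s} (terminated_inputs M s m))"
  proof
    fix t assume "t \<in> T"
    then have "t \<in> T2" and maximal: "\<not> (\<exists>t' \<in> T2. \<exists>r. r \<noteq> [] \<and> t' = t @ r)"
      unfolding T by auto
    then obtain s where s: "s \<in> states M" and t: "t \<in> cat {v s} (pref (terminated_inputs M s m))"
      unfolding T2_eq by blast
    have "cat {v s} (pref (terminated_inputs M s m)) \<subseteq> T2" unfolding T2_eq using s by blast
    with s show "t \<in> (\<Union>s \<in> states M. cat {v s} (terminated_inputs M s m))"
      using maximal_in_cat_pref[OF t _ maximal] by blast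
  qed
  then show ?thesis using that by blast
qed

theorem mainTheorem3:
  fixes M :: "('s, 'x, 'y) fsm" and m n :: nat and T :: "'x list set"
  assumes "well_formed M"
    and "inputs M \<noteq> {}"
    and "observable M"
    and "card (states M) = n"
    and "\<forall>s \<in> states M. reachable M s"
    and "\<forall>s \<in> states M. d_reachable M s"
    and "\<forall>s1 \<in> states M. \<forall>s2 \<in> states M. s1 \<noteq> s2 \<longrightarrow> Delta M s1 \<noteq> Delta M s2"
    and "m \<ge> n"
    and "generate_test_suite M m T"
  shows "finite T \<and> card T \<le> n * card (inputs M) ^ (m - n + 1)"
proof -
  obtain v where T_sub: "T \<subseteq> (\<Union>s \<in> states M. cat {v s} (terminated_inputs M s m))"
    using generate_test_suite_subset[OF assms(7,6,9)] .
  have "finite (states M)" using assms(1) by (simp add: well_formed_def)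
  moreover have "finite (cat {v s} (terminated_inputs M s m)) \<and>
      card (cat {v s} (terminated_inputs M s m)) \<le> card (inputs M) ^ (m - n + 1)"
    if "s \<in> states M" for s
    using card_cat_terminated_inputs_le[OF assms(1-3) that assms(7,6)] assms(4) by simp
  ultimately have "finite (\<Union>s \<in> states M. cat {v s} (terminated_inputs M s m)) \<and>
      card (\<Union>s \<in> states M. cat {v s} (terminated_inputs M s m))
        \<le> n * card (inputs M) ^ (m - n + 1)"
    by (subst assms(4)[symmetric]) (rule finite_card_UN_le)
  with T_sub show ?thesis using card_mono[OF _ T_sub] finite_subset[OF T_sub] by fastforce
qed

end
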